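(* Let $k \ge 2$ be an integer. Among $2^k$ identical-looking coins, exactly two of which are counterfeit, there is an adaptive strategy that determines both counterfeit coins using at most $k+1$ weighings on a 5-way scale.
   Context: Coins look identical; all genuine coins have one common weight, all counterfeit coins have one common weight strictly less than the genuine weight. A weighing places two disjoint sets of coins of equal cardinality on the left and right pans. Let $d$ = (number of counterfeit coins on the left pan) $-$ (number of counterfeit coins on the right pan). A 5-way scale reports MUCH LESS if $d \ge 2$, LESS if $d = 1$, EQUAL if $d = 0$, MORE if $d = -1$, MUCH MORE if $d \le -2$. A strategy chooses each weighing possibly depending on previous outcomes; it determines the counterfeit coins if the sequence of outcomes uniquely identifies the set of counterfeit coins. *)

theory Defs
  imports Main
begin

datatype outcome = MuchLess | Less | Equal | More | MuchMore

definition weigh :: "nat set \<Rightarrow> nat set \<Rightarrow> nat set \<Rightarrow> outcome" where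
  "weigh L R C = (let d = int (card (C \<inter> L)) - int (card (C \<inter> R)) in
     if d \<ge> 2 then MuchLess else if d = 1 then Less else if d = 0 then Equal
     else if d = -1 then More else MuchMore)"

datatype strategy = Stop | Weigh "nat set" "nat set" "outcome \<Rightarrow> strategy"

primrec run :: "strategy \<Rightarrow> nat set \<Rightarrow> outcome list" where
  "run Stop C = []"
| "run (Weigh L R f) C = weigh L R C # run (f (weigh L R C)) C"

primrec legal :: "nat \<Rightarrow> strategy \<Rightarrow> bool" where
  "legal N Stop = True"
| "legal N (Weigh L R f) = (L \<subseteq> {0..<N} \<and> R \<subseteq> {0..<N} \<and> L \<inter> R = {} \<and>
      card L = card R \<and> (\<forall>r. legal N (f r)))"

end

theory Submission
  imports Defs
begin

text \<open>Split the coins into halves \<open>A\<close>, \<open>B\<close> and weigh them. MuchLess or MuchMore puts both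
  counterfeits in one half, and we recurse. Equal puts one counterfeit in each half, so it remains
  to find a pair in \<open>A \<times> B\<close> with \<open>|A| = |B| = 2^j\<close> in \<open>j + 1\<close> weighings. Weighing the halves
  \<open>A\<^sub>1, A\<^sub>2\<close> of \<open>A\<close> against each other locates the counterfeit of \<open>A\<close>, say in \<open>A\<^sub>1\<close>, and makes the
  coins of \<open>A\<^sub>2\<close> known to be genuine. With a supply of genuine coins, a candidate family
  \<open>A' \<times> B'\<close> with \<open>|A'| \<le> |B'|\<close> is cut into four quarters by one weighing: halve
  \<open>A' = A\<^sub>a \<union> A\<^sub>b\<close> and \<open>B' = B\<^sub>a \<union> B\<^sub>b\<close> and put \<open>A\<^sub>a \<union> B\<^sub>a\<close> against \<open>A\<^sub>b\<close> padded with genuine coins;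
  the four outcomes MuchLess, Less, Equal, More identify the quarter.\<close>

definition identifies :: "nat \<Rightarrow> strategy \<Rightarrow> nat set set \<Rightarrow> nat \<Rightarrow> bool" where
  "identifies N s F n \<longleftrightarrow> legal N s \<and> (\<forall>C\<in>F. length (run s C) \<le> n)
     \<and> (\<forall>C1\<in>F. \<forall>C2\<in>F. run s C1 = run s C2 \<longrightarrow> C1 = C2)"

lemma identifies_mono:
  "identifies N s F' n \<Longrightarrow> F \<subseteq> F' \<Longrightarrow> n \<le> m \<Longrightarrow> identifies N s F m"
  unfolding identifies_def by (meson order_trans subsetD)

lemma identifies_StopI:
  "(\<And>C1 C2. C1 \<in> F \<Longrightarrow> C2 \<in> F \<Longrightarrow> C1 = C2) \<Longrightarrow> \<exists>s. identifies N s F n"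
  by (rule exI[of _ Stop]) (simp add: identifies_def)

lemma identifies_WeighI:
  assumes "L \<subseteq> {0..<N}" "R \<subseteq> {0..<N}" "L \<inter> R = {}" "card L = card R"
    and "\<And>r. \<exists>s. identifies N s {C\<in>F. weigh L R C = r} n"
  shows "\<exists>s. identifies N s F (Suc n)"
proof -
  obtain f where f: "\<And>r. identifies N (f r) {C\<in>F. weigh L R C = r} n"
    using assms(5) by metis
  have "identifies N (Weigh L R f) F (Suc n)"
    unfolding identifies_def
  proof (intro conjI ballI impI)
    show "legal N (Weigh L R f)" using assms f by (simp add: identifies_def)
  next
    fix C assume "C \<in> F"
    then show "length (run (Weigh L R f) C) \<le> Suc n"
      using f[of "weigh L R C"] by (simp add: identifies_def)
  next
    fix C1 C2 assume C: "C1 \<in> F" "C2 \<in> F" "run (Weigh L R f) C1 = run (Weigh L R f) C2"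
    then have same: "weigh L R C1 = weigh L R C2" by simp
    with C have "run (f (weigh L R C1)) C1 = run (f (weigh L R C1)) C2" by simp
    with f[of "weigh L R C1"] C same show "C1 = C2" by (simp add: identifies_def)
  qed
  then show ?thesis by blast
qed

lemma card_pair_Int:
  "a \<noteq> b \<Longrightarrow> card ({a,b} \<inter> L) = (if a \<in> L then 1 else 0) + (if b \<in> L then 1 else 0)"
  by (cases "a \<in> L"; cases "b \<in> L") (auto simp: Int_insert_left)

lemma obtain_halves:
  assumes "card S = 2 ^ Suc i"
  obtains A B where "A \<union> B = S" "A \<inter> B = {}" "card A = 2 ^ i" "card B = 2 ^ i"
proof -
  obtain A where A: "A \<subseteq> S" "card A = 2 ^ i"
    using assms obtain_subset_with_card_n[of "2 ^ i" S] by force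
  have "finite S" using assms card.infinite by force
  then have "card (S - A) = 2 ^ i" using A assms by (simp add: card_Diff_subset finite_subset)
  then show ?thesis using that[of A "S - A"] A by blast
qed

definition cross :: "nat set \<Rightarrow> nat set \<Rightarrow> nat set set" where
  "cross A B = {{a,b} | a b. a \<in> A \<and> b \<in> B}"

lemma cross_filter_subset:
  "(\<And>a b. a \<in> A \<Longrightarrow> b \<in> B \<Longrightarrow> P {a,b} \<Longrightarrow> a \<in> X \<and> b \<in> Y)
    \<Longrightarrow> {C \<in> cross A B. P C} \<subseteq> cross X Y"
  unfolding cross_def by blast

lemma identifies_cross_singleton:
  assumes "card B = 2 ^ q" "a \<notin> B" "B \<subseteq> {0..<N}"
  shows "\<exists>s. identifies N s (cross {a} B) q"
  using assms
proof (induction q arbitrary: B)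
  case 0
  then obtain b where "B = {b}" by (metis card_1_singletonE power_0)
  then show ?case by (intro identifies_StopI) (auto simp: cross_def)
next
  case (Suc q)
  obtain Ba Bb where B: "Ba \<union> Bb = B" "Ba \<inter> Bb = {}" "card Ba = 2 ^ q" "card Bb = 2 ^ q"
    using obtain_halves[OF Suc.prems(1)] by blast
  have IH: "\<exists>s. identifies N s (cross {a} X) q" if "X \<subseteq> B" "card X = 2 ^ q" for X
    using Suc.IH[of X] Suc.prems that by blast
  show ?case
  proof (rule identifies_WeighI[of Ba N Bb])
    show "Ba \<subseteq> {0..<N}" "Bb \<subseteq> {0..<N}" "Ba \<inter> Bb = {}" "card Ba = card Bb"
      using B Suc.prems by auto
    fix r
    have key: "weigh Ba Bb {a,b} = (if b \<in> Ba then Less else More)" if "b \<in> B" for b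
    proof -
      have "a \<noteq> b" "a \<notin> Ba" "a \<notin> Bb" using that Suc.prems(2) B(1) by auto
      then show ?thesis using that B by (auto simp: weigh_def card_pair_Int)
    qed
    show "\<exists>s. identifies N s {C \<in> cross {a} B. weigh Ba Bb C = r} q"
    proof (cases r)
      case Less
      have "{C \<in> cross {a} B. weigh Ba Bb C = r} \<subseteq> cross {a} Ba"
        by (rule cross_filter_subset) (use key Less in \<open>auto split: if_splits\<close>)
      then show ?thesis using IH[of Ba] B identifies_mono by blast
    next
      case More
      have "{C \<in> cross {a} B. weigh Ba Bb C = r} \<subseteq> cross {a} Bb"
        by (rule cross_filter_subset) (use key More B(1) in \<open>auto split: if_splits\<close>)
      then show ?thesis using IH[of Bb] B identifies_mono by blast
    qed (rule identifies_StopI, use key in \<open>auto simp: cross_def split: if_splits\<close>)+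
  qed
qed

lemma weigh_quarters:
  assumes "a \<in> Aa \<union> Ab" "b \<in> Ba \<union> Bb" "Aa \<inter> Ab = {}" "Ba \<inter> Bb = {}"
    and "(Aa \<union> Ab) \<inter> (Ba \<union> Bb) = {}" "(Aa \<union> Ab) \<inter> G = {}" "(Ba \<union> Bb) \<inter> G = {}"
  shows "weigh (Aa \<union> Ba) (Ab \<union> G) {a,b} =
    (if a \<in> Aa then (if b \<in> Ba then MuchLess else Less) else (if b \<in> Ba then Equal else More))"
proof -
  have "a \<noteq> b" "a \<notin> Ba" "b \<notin> Aa" "b \<notin> Ab" "b \<notin> G" "a \<notin> G"
    using assms by blast+
  then show ?thesis using assms(1-4) by (auto simp: weigh_def card_pair_Int)
qed

lemma weigh_quarters_cross:
  assumes "Aa \<inter> Ab = {}" "Ba \<inter> Bb = {}"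
    and "(Aa \<union> Ab) \<inter> (Ba \<union> Bb) = {}" "(Aa \<union> Ab) \<inter> G = {}" "(Ba \<union> Bb) \<inter> G = {}"
  shows "\<exists>X\<in>{Aa,Ab}. \<exists>Y\<in>{Ba,Bb}.
    {C \<in> cross (Aa \<union> Ab) (Ba \<union> Bb). weigh (Aa \<union> Ba) (Ab \<union> G) C = r} \<subseteq> cross X Y"
proof -
  note key = weigh_quarters[OF _ _ assms]
  show ?thesis
  proof (cases r)
    case MuchLess
    then show ?thesis by (intro bexI[of _ Aa] bexI[of _ Ba] cross_filter_subset)
        (use key in \<open>auto split: if_splits\<close>)
  next
    case Less
    then show ?thesis by (intro bexI[of _ Aa] bexI[of _ Bb] cross_filter_subset)
        (use key assms(1,2) in \<open>auto split: if_splits\<close>)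
  next
    case Equal
    then show ?thesis by (intro bexI[of _ Ab] bexI[of _ Ba] cross_filter_subset)
        (use key in \<open>auto split: if_splits\<close>)
  next
    case More
    then show ?thesis by (intro bexI[of _ Ab] bexI[of _ Bb] cross_filter_subset)
        (use key in \<open>auto split: if_splits\<close>)
  next
    case MuchMore
    then show ?thesis by (intro bexI[of _ Aa] bexI[of _ Ba] cross_filter_subset)
        (use key in \<open>auto split: if_splits\<close>)
  qed
qed

text \<open>The coins of \<open>G\<close> are disjoint from every candidate pair, hence genuine; they pad the right pan.\<close>

lemma identifies_cross_spare:
  assumes "p \<le> q" "card A = 2 ^ p" "card B = 2 ^ q" "2 ^ (q - 1) \<le> card G"
    and "A \<inter> B = {}" "A \<inter> G = {}" "B \<inter> G = {}"
    and "A \<subseteq> {0..<N}" "B \<subseteq> {0..<N}" "G \<subseteq> {0..<N}"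
  shows "\<exists>s. identifies N s (cross A B) q"
  using assms
proof (induction p arbitrary: q A B)
  case 0
  then obtain a where "A = {a}" by (metis card_1_singletonE power_0)
  then show ?case using identifies_cross_singleton 0 by auto
next
  case (Suc p)
  then obtain q' where q: "q = Suc q'" by (cases q) auto
  obtain Aa Ab where A: "Aa \<union> Ab = A" "Aa \<inter> Ab = {}" "card Aa = 2 ^ p" "card Ab = 2 ^ p"
    using obtain_halves[of A p] Suc.prems(2) by blast
  obtain Ba Bb where B: "Ba \<union> Bb = B" "Ba \<inter> Bb = {}" "card Ba = 2 ^ q'" "card Bb = 2 ^ q'"
    using obtain_halves[of B q'] Suc.prems(3) q by blast
  obtain G' where G': "G' \<subseteq> G" "card G' = 2 ^ q'"
    using obtain_subset_with_card_n[of "2 ^ q'" G] Suc.prems(4) q by auto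
  have IH: "\<exists>s. identifies N s (cross X Y) q'"
    if "X \<in> {Aa,Ab}" "Y \<in> {Ba,Bb}" for X Y
  proof -
    have "X \<subseteq> A" "card X = 2 ^ p" "Y \<subseteq> B" "card Y = 2 ^ q'"
      using that A B by auto
    then show ?thesis
      by (intro Suc.IH) (use Suc.prems q in \<open>auto intro: order_trans[OF _ Suc.prems(4)]\<close>)
  qed
  have fin: "finite Aa" "finite Ba" "finite Ab" "finite G'"
    using A B G' by (auto intro: card_ge_0_finite)
  show ?case
    unfolding q
  proof (rule identifies_WeighI[of "Aa \<union> Ba" N "Ab \<union> G'"])
    show "Aa \<union> Ba \<subseteq> {0..<N}" "Ab \<union> G' \<subseteq> {0..<N}" "(Aa \<union> Ba) \<inter> (Ab \<union> G') = {}"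
      using A B G' Suc.prems by auto
    have "Aa \<inter> Ba = {}" "Ab \<inter> G' = {}" using A B G' Suc.prems(5-7) by blast+
    then show "card (Aa \<union> Ba) = card (Ab \<union> G')"
      using A B G' fin by (simp add: card_Un_disjoint)
    fix r
    obtain X Y where XY: "X \<in> {Aa,Ab}" "Y \<in> {Ba,Bb}"
      and quarter: "{C \<in> cross A B. weigh (Aa \<union> Ba) (Ab \<union> G') C = r} \<subseteq> cross X Y"
    proof -
      have "A \<inter> G' = {}" "B \<inter> G' = {}" using G'(1) Suc.prems(6,7) by blast+
      then show thesis
        using that weigh_quarters_cross[of Aa Ab Ba Bb G' r, unfolded A(1) B(1)]
          A(2) B(2) Suc.prems(5) by blast
    qed
    then show "\<exists>s. identifies N s {C \<in> cross A B. weigh (Aa \<union> Ba) (Ab \<union> G') C = r} q'"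
      using IH[OF XY] identifies_mono[OF _ quarter order_refl] by blast
  qed
qed

lemma identifies_cross:
  assumes "card A = 2 ^ j" "card B = 2 ^ j" "A \<inter> B = {}" "A \<subseteq> {0..<N}" "B \<subseteq> {0..<N}"
  shows "\<exists>s. identifies N s (cross A B) (Suc j)"
proof (cases j)
  case 0
  with assms obtain a b where "A = {a}" "B = {b}" by (metis card_1_singletonE power_0)
  then show ?thesis by (intro identifies_StopI) (auto simp: cross_def)
next
  case (Suc i)
  obtain A1 A2 where A: "A1 \<union> A2 = A" "A1 \<inter> A2 = {}" "card A1 = 2 ^ i" "card A2 = 2 ^ i"
    using obtain_halves[of A i] assms(1) Suc by blast
  have located: "\<exists>s. identifies N s (cross X B) j"
    if "X \<union> Y = A" "X \<inter> Y = {}" "card X = 2 ^ i" "card Y = 2 ^ i" for X Y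
    by (rule identifies_cross_spare[of i j X B Y]) (use that assms Suc in auto)
  show ?thesis
  proof (rule identifies_WeighI[of A1 N A2])
    show "A1 \<subseteq> {0..<N}" "A2 \<subseteq> {0..<N}" "A1 \<inter> A2 = {}" "card A1 = card A2"
      using A assms by auto
    fix r
    have key: "weigh A1 A2 {a,b} = (if a \<in> A1 then Less else More)" if "a \<in> A" "b \<in> B" for a b
    proof -
      have "a \<noteq> b" "b \<notin> A1" "b \<notin> A2" using that A assms(3) by blast+
      then show ?thesis using that A by (auto simp: weigh_def card_pair_Int)
    qed
    show "\<exists>s. identifies N s {C \<in> cross A B. weigh A1 A2 C = r} j"
    proof (cases r)
      case Less
      have "{C \<in> cross A B. weigh A1 A2 C = r} \<subseteq> cross A1 B"
        by (rule cross_filter_subset) (use key Less in \<open>auto split: if_splits\<close>)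
      then show ?thesis using located[of A1 A2] A identifies_mono by blast
    next
      case More
      have "{C \<in> cross A B. weigh A1 A2 C = r} \<subseteq> cross A2 B"
        by (rule cross_filter_subset) (use key More A(1) in \<open>auto split: if_splits\<close>)
      then show ?thesis using located[of A2 A1] A identifies_mono by (metis Int_commute sup_commute order_refl)
    qed (rule identifies_StopI, use key in \<open>auto simp: cross_def split: if_splits\<close>)+
  qed
qed

definition pairs :: "nat set \<Rightarrow> nat set set" where
  "pairs S = {C. C \<subseteq> S \<and> card C = 2}"

lemma weigh_pair_halves:
  assumes "C \<in> pairs (A \<union> B)" "A \<inter> B = {}"
  shows "weigh A B C = (if C \<subseteq> A then MuchLess else if C \<subseteq> B then MuchMore else Equal)"
    and "\<not> C \<subseteq> A \<Longrightarrow> \<not> C \<subseteq> B \<Longrightarrow> C \<in> cross A B"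
proof -
  obtain x y where xy: "C = {x,y}" "x \<noteq> y"
    using assms(1) by (auto simp: pairs_def card_2_iff)
  have "x \<in> A \<and> x \<notin> B \<or> x \<in> B \<and> x \<notin> A" "y \<in> A \<and> y \<notin> B \<or> y \<in> B \<and> y \<notin> A"
    using assms xy unfolding pairs_def by blast+
  then show "weigh A B C = (if C \<subseteq> A then MuchLess else if C \<subseteq> B then MuchMore else Equal)"
    and "\<not> C \<subseteq> A \<Longrightarrow> \<not> C \<subseteq> B \<Longrightarrow> C \<in> cross A B"
    using xy by (auto simp: weigh_def card_pair_Int cross_def insert_commute)
qed

lemma identifies_pairs:
  assumes "card S = 2 ^ j" "1 \<le> j" "S \<subseteq> {0..<N}"
  shows "\<exists>s. identifies N s (pairs S) (Suc j)"
  using assms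
proof (induction j arbitrary: S)
  case 0
  then show ?case by simp
next
  case (Suc j S)
  show ?case
  proof (cases j)
    case 0
    have "finite S" using Suc.prems by (auto intro: card_ge_0_finite)
    then show ?thesis
      using Suc.prems 0 by (intro identifies_StopI) (auto simp: pairs_def dest: card_subset_eq)
  next
    case (Suc i)
    obtain A B where AB: "A \<union> B = S" "A \<inter> B = {}" "card A = 2 ^ j" "card B = 2 ^ j"
      using obtain_halves[of S j] Suc.prems(1) by blast
    have IH: "\<exists>s. identifies N s (pairs X) (Suc j)" if "X \<subseteq> S" "card X = 2 ^ j" for X
      using Suc.IH[of X] Suc.prems that \<open>j = Suc i\<close> by auto
    show ?thesis
    proof (rule identifies_WeighI[of A N B])
      show "A \<subseteq> {0..<N}" "B \<subseteq> {0..<N}" "A \<inter> B = {}" "card A = card B"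
        using AB Suc.prems by auto
      fix r
      note key = weigh_pair_halves[where A = A and B = B, unfolded AB(1), OF _ AB(2)]
      show "\<exists>s. identifies N s {C \<in> pairs S. weigh A B C = r} (Suc j)"
      proof (cases r)
        case MuchLess
        have "{C \<in> pairs S. weigh A B C = r} \<subseteq> pairs A"
          using key(1) MuchLess unfolding pairs_def by (auto split: if_splits)
        then show ?thesis using IH[of A] AB identifies_mono by blast
      next
        case MuchMore
        have "{C \<in> pairs S. weigh A B C = r} \<subseteq> pairs B"
          using key(1) MuchMore unfolding pairs_def by (auto split: if_splits)
        then show ?thesis using IH[of B] AB identifies_mono by blast
      next
        case Equal
        have "{C \<in> pairs S. weigh A B C = r} \<subseteq> cross A B"
          using key Equal by (auto split: if_splits)
        then show ?thesis using identifies_cross[of A j B N] AB Suc.prems identifies_mono by blast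
      qed (rule identifies_StopI, use key(1) in \<open>auto split: if_splits\<close>)+
    qed
  qed
qed

theorem mainTheorem7:
  fixes k :: nat
  assumes "k \<ge> 2"
  shows "\<exists>s. legal (2 ^ k) s
    \<and> (\<forall>C. C \<subseteq> {0..<2 ^ k} \<and> card C = 2 \<longrightarrow> length (run s C) \<le> k + 1)
    \<and> (\<forall>C1 C2. C1 \<subseteq> {0..<2 ^ k} \<and> card C1 = 2 \<and> C2 \<subseteq> {0..<2 ^ k} \<and> card C2 = 2
          \<and> run s C1 = run s C2 \<longrightarrow> C1 = C2)"
proof -
  obtain s where "identifies (2 ^ k) s (pairs {0..<2 ^ k}) (Suc k)"
    using identifies_pairs[of "{0..<2 ^ k}" k "2 ^ k"] assms by auto
  then show ?thesis unfolding identifies_def pairs_def by (intro exI[of _ s]) auto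
qed

end
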